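(* Let $N\ge 1$ and consider $N$ coupled two-level systems (qubits) with Hilbert space $(\mathbb{C}^2)^{\otimes N}$ and Ising-like Hamiltonian $$H_S=\frac{1}{2}\,\mathbf{I}+\sum_{j=1}^{N}\frac{\epsilon_j}{2}\,\sigma_z^{j}+\sum_{1\le j<k\le N}\Delta_{zz}^{jk}\,\sigma_z^{j}\sigma_z^{k},$$ where $\epsilon_j,\Delta_{zz}^{jk}\in\mathbb{R}$ (set $\Delta_{zz}^{kj}:=\Delta_{zz}^{jk}$). Let $\rho_M$ be a post-measurement state (any density matrix on $(\mathbb{C}^2)^{\otimes N}$, obtained from a projective or POVM measurement). For $\boldsymbol\theta=(\theta_1,\dots,\theta_N)\in\mathbb{R}^N$ apply the local feedback unitary $U(\boldsymbol\theta)=\bigotimes_{j=1}^N U_j(\theta_j)$, $U_j(\theta_j)=\exp(-i\theta_j\sigma_y^{j}/2)$, giving $\rho_F=U(\boldsymbol\theta)\rho_M U(\boldsymbol\theta)^\dagger$ and post-feedback energy $E_F(\boldsymbol\theta)=\mathrm{Tr}(\rho_F H_S)$. For each $j$ and each $k\neq j$, let $\widetilde{\sigma_z^{k}}(\theta_k):=\sigma_z^{k}\cos\theta_k-\sigma_x^{k}\sin\theta_k$ (the rotated operator $U_k^\dagger(\theta_k)\sigma_z^kU_k(\theta_k)$), and define, as functions of the other angles $\{\theta_k\}_{k\ne j}$, $$A_j=\frac{\epsilon_j}{2}\,\mathrm{Tr}\big(\rho_M\sigma_z^{j}\big)+\sum_{k\neq j}\Delta_{zz}^{jk}\,\mathrm{Tr}\big(\rho_M\,\sigma_z^{j}\,\widetilde{\sigma_z^{k}}(\theta_k)\big),$$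 $$B_j=\frac{\epsilon_j}{2}\,\mathrm{Tr}\big(\rho_M\sigma_x^{j}\big)+\sum_{k\neq j}\Delta_{zz}^{jk}\,\mathrm{Tr}\big(\rho_M\,\sigma_x^{j}\,\widetilde{\sigma_z^{k}}(\theta_k)\big).$$ Then the optimal local feedback angles $\{\theta_j^\ast\}_{j=1}^N$ (minimizers of $E_F$, which are in particular stationary points $\partial E_F/\partial\theta_j=0$ for all $j$) satisfy the set of self-consistent equations $$\tan\theta_j^\ast=\frac{-B_j(\theta_1^\ast,\dots,\theta_{j-1}^\ast,\theta_{j+1}^\ast,\dots,\theta_N^\ast)}{A_j(\theta_1^\ast,\dots,\theta_{j-1}^\ast,\theta_{j+1}^\ast,\dots,\theta_N^\ast)},\qquad\text{i.e.}\qquad \theta_j^\ast\equiv\operatorname{atan2}(-B_j,A_j)\pmod{\pi},$$ for all $1\le j\le N$.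
   Context: $\sigma_x^{j},\sigma_y^{j},\sigma_z^{j}$ denote the Pauli matrices acting on the $j$-th tensor factor (identity on the others); $\mathbf{I}$ is the identity on $(\mathbb{C}^2)^{\otimes N}$. Under $U_j(\theta_j)=\exp(-i\theta_j\sigma_y^j/2)$ one has $U_j^\dagger\sigma_z^jU_j=\sigma_z^j\cos\theta_j-\sigma_x^j\sin\theta_j$ and $U_j^\dagger\sigma_x^jU_j=\sigma_x^j\cos\theta_j+\sigma_z^j\sin\theta_j$. $\operatorname{atan2}(y,x)$ is the two-argument arctangent. *)

theory Defs
  imports Complex_Main "Jordan_Normal_Form.Schur_Decomposition"
begin

text \<open>Hilbert space (C^2)^(tensor N), dimension 2^N. The computational basis state
  with index r < 2^N has qubit j in state |bit r j>, with |0> the +1 eigenvector of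
  sigma_z and |1> the -1 eigenvector.\<close>

definition sigma_z :: "nat \<Rightarrow> nat \<Rightarrow> complex mat" where
  "sigma_z N j = mat (2^N) (2^N)
     (\<lambda>(r,c). if r = c then (if bit r j then -1 else 1) else 0)"

definition sigma_x :: "nat \<Rightarrow> nat \<Rightarrow> complex mat" where
  "sigma_x N j = mat (2^N) (2^N)
     (\<lambda>(r,c). if c = flip_bit j r then 1 else 0)"

definition sigma_y :: "nat \<Rightarrow> nat \<Rightarrow> complex mat" where
  "sigma_y N j = mat (2^N) (2^N)
     (\<lambda>(r,c). if c = flip_bit j r then (if bit r j then \<i> else - \<i>) else 0)"

definition idm :: "nat \<Rightarrow> complex mat" where
  "idm N = 1\<^sub>m (2^N)"

definition msum :: "nat \<Rightarrow> complex mat list \<Rightarrow> complex mat" where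
  "msum N Ms = foldr (+) Ms (0\<^sub>m (2^N) (2^N))"

text \<open>U_j(theta) = exp(-i theta sigma_y^j / 2) = cos(theta/2) I - i sin(theta/2) sigma_y^j
  (since (sigma_y^j)^2 = I).\<close>
definition U_loc :: "nat \<Rightarrow> nat \<Rightarrow> real \<Rightarrow> complex mat" where
  "U_loc N j \<theta> = complex_of_real (cos (\<theta>/2)) \<cdot>\<^sub>m idm N
                   - (\<i> * complex_of_real (sin (\<theta>/2))) \<cdot>\<^sub>m sigma_y N j"

text \<open>U(theta) = tensor product of the U_j(theta_j) = product of the (commuting)
  single-site operators U_j(theta_j), j = 0..N-1.\<close>
definition U_fb :: "nat \<Rightarrow> (nat \<Rightarrow> real) \<Rightarrow> complex mat" where
  "U_fb N \<theta> = foldr (\<lambda>j M. U_loc N j (\<theta> j) * M) [0..<N] (idm N)"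

text \<open>Qubits are indexed 0..N-1; Delta j k is used for j < k (Delta^{kj} := Delta^{jk}).\<close>
definition H_S :: "nat \<Rightarrow> (nat \<Rightarrow> real) \<Rightarrow> (nat \<Rightarrow> nat \<Rightarrow> real) \<Rightarrow> complex mat" where
  "H_S N \<epsilon> \<Delta> = msum N
     ([(1/2) \<cdot>\<^sub>m idm N]
      @ map (\<lambda>j. complex_of_real (\<epsilon> j / 2) \<cdot>\<^sub>m sigma_z N j) [0..<N]
      @ concat (map (\<lambda>j. map (\<lambda>k. complex_of_real (\<Delta> j k) \<cdot>\<^sub>m (sigma_z N j * sigma_z N k))
                              [Suc j..<N]) [0..<N]))"

definition mtrace :: "complex mat \<Rightarrow> complex" where
  "mtrace A = (\<Sum>i<dim_row A. A $$ (i, i))"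

definition density_matrix :: "nat \<Rightarrow> complex mat \<Rightarrow> bool" where
  "density_matrix N \<rho> \<longleftrightarrow> \<rho> \<in> carrier_mat (2^N) (2^N)
     \<and> mat_adjoint \<rho> = \<rho>
     \<and> (\<forall>v \<in> carrier_vec (2^N). 0 \<le> Re (v \<bullet>c (\<rho> *\<^sub>v v)))
     \<and> mtrace \<rho> = 1"

definition E_F :: "nat \<Rightarrow> (nat \<Rightarrow> real) \<Rightarrow> (nat \<Rightarrow> nat \<Rightarrow> real) \<Rightarrow> complex mat
                   \<Rightarrow> (nat \<Rightarrow> real) \<Rightarrow> real" where
  "E_F N \<epsilon> \<Delta> \<rho> \<theta> = Re (mtrace (U_fb N \<theta> * \<rho> * mat_adjoint (U_fb N \<theta>) * H_S N \<epsilon> \<Delta>))"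

definition sigma_z_rot :: "nat \<Rightarrow> nat \<Rightarrow> real \<Rightarrow> complex mat" where
  "sigma_z_rot N k \<theta> = complex_of_real (cos \<theta>) \<cdot>\<^sub>m sigma_z N k
                        - complex_of_real (sin \<theta>) \<cdot>\<^sub>m sigma_x N k"

definition A_coef :: "nat \<Rightarrow> (nat \<Rightarrow> real) \<Rightarrow> (nat \<Rightarrow> nat \<Rightarrow> real) \<Rightarrow> complex mat
                      \<Rightarrow> nat \<Rightarrow> (nat \<Rightarrow> real) \<Rightarrow> real" where
  "A_coef N \<epsilon> \<Delta> \<rho> j \<theta> =
     \<epsilon> j / 2 * Re (mtrace (\<rho> * sigma_z N j))
     + (\<Sum>k\<in>{0..<N} - {j}. \<Delta> (min j k) (max j k)
          * Re (mtrace (\<rho> * sigma_z N j * sigma_z_rot N k (\<theta> k))))"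

definition B_coef :: "nat \<Rightarrow> (nat \<Rightarrow> real) \<Rightarrow> (nat \<Rightarrow> nat \<Rightarrow> real) \<Rightarrow> complex mat
                      \<Rightarrow> nat \<Rightarrow> (nat \<Rightarrow> real) \<Rightarrow> real" where
  "B_coef N \<epsilon> \<Delta> \<rho> j \<theta> =
     \<epsilon> j / 2 * Re (mtrace (\<rho> * sigma_x N j))
     + (\<Sum>k\<in>{0..<N} - {j}. \<Delta> (min j k) (max j k)
          * Re (mtrace (\<rho> * sigma_x N j * sigma_z_rot N k (\<theta> k))))"

definition atan2 :: "real \<Rightarrow> real \<Rightarrow> real" where
  "atan2 y x =
    (if x > 0 then arctan (y / x)
     else if x < 0 \<and> y \<ge> 0 then arctan (y / x) + pi
     else if x < 0 \<and> y < 0 then arctan (y / x) - pi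
     else if y > 0 then pi / 2
     else if y < 0 then - (pi / 2)
     else 0)"

end

theory Submission
  imports Defs
begin

text \<open>Each single-qubit rotation \<open>U\<^sub>k(\<theta>\<^sub>k)\<close> commutes with every operator acting on another qubit,
  so conjugating by their product turns \<open>\<sigma>\<^sub>z\<^sup>j\<close> into \<open>\<sigma>\<^sub>z\<^sup>j(\<theta>\<^sub>j) = \<sigma>\<^sub>z\<^sup>j cos \<theta>\<^sub>j - \<sigma>\<^sub>x\<^sup>j sin \<theta>\<^sub>j\<close>
  and \<open>E\<^sub>F(\<theta>) = Tr(\<rho>\<^sub>M U\<^sup>\<dagger> H\<^sub>S U)\<close> into a sum of expectations of the rotated operators
  and their pairwise products. Each term involves \<open>\<theta>\<^sub>j\<close> at most linearly through
  \<open>\<sigma>\<^sub>z\<^sup>j(\<theta>\<^sub>j)\<close>, so with the other angles frozen \<open>E\<^sub>F = C + A\<^sub>j cos \<theta>\<^sub>j - B\<^sub>j sin \<theta>\<^sub>j\<close>.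
  At a minimiser the derivative \<open>-A\<^sub>j sin \<theta>\<^sub>j - B\<^sub>j cos \<theta>\<^sub>j\<close> vanishes, which is
  \<open>tan \<theta>\<^sub>j = -B\<^sub>j / A\<^sub>j\<close>, i.e. \<open>\<theta>\<^sub>j \<equiv> atan2(-B\<^sub>j, A\<^sub>j) (mod \<pi>)\<close>.\<close>

lemma flip_bit_less_exp:
  fixes r :: nat
  assumes "r < 2^N" "j < N"
  shows "flip_bit j r < 2^N"
proof -
  have "take_bit N r = r"
    using assms(1) by (simp add: take_bit_nat_eq_self_iff)
  then have "take_bit N (flip_bit j r) = flip_bit j r"
    using assms(2) by (simp add: take_bit_flip_bit_eq)
  then show ?thesis
    by (metis take_bit_nat_less_exp)
qed

lemma bit_flip_bit_nat [simp]:
  "bit (flip_bit a (r::nat)) j \<longleftrightarrow> (if j = a then \<not> bit r j else bit r j)"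
  by (auto simp: bit_flip_bit_iff)

lemma flip_bit_flip_bit [simp]: "flip_bit j (flip_bit j r) = (r::nat)"
  by (rule bit_eqI) (auto simp: bit_flip_bit_iff)

lemma flip_bit_inject [simp]: "flip_bit j (r::nat) = flip_bit j c \<longleftrightarrow> r = c"
  by (rule iffI, drule arg_cong[where f = "flip_bit j"]) simp_all

lemma flip_bit_neq [simp]: "flip_bit j (r::nat) \<noteq> r" "r \<noteq> flip_bit j r"
  by (auto dest: arg_cong[where f = "\<lambda>x. bit x j"])

lemma flip_bit_neq_flip_bit [simp]: "a \<noteq> b \<Longrightarrow> flip_bit a (r::nat) \<noteq> flip_bit b r"
  by (auto dest: arg_cong[where f = "\<lambda>x. bit x a"])

lemma flip_bit_flip_bit_neq [simp]:
  "a \<noteq> b \<Longrightarrow> flip_bit a (flip_bit b (r::nat)) \<noteq> r"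
  "a \<noteq> b \<Longrightarrow> r \<noteq> flip_bit a (flip_bit b (r::nat))"
  by (auto dest: arg_cong[where f = "\<lambda>x. bit x a"])

lemma flip_bit_commute: "flip_bit a (flip_bit b r) = flip_bit b (flip_bit a (r::nat))"
  by (rule bit_eqI) (auto simp: bit_flip_bit_iff)

lemma mult_carrier_mat_square [simp]:
  "A \<in> carrier_mat n n \<Longrightarrow> B \<in> carrier_mat n n \<Longrightarrow> A * B \<in> carrier_mat n n"
  by (rule mult_carrier_mat)

lemma mat_adjoint_dim [simp]:
  "dim_row (mat_adjoint A) = dim_col A" "dim_col (mat_adjoint A) = dim_row A"
  by (simp_all add: mat_adjoint_def)

lemma mat_adjoint_carrier [simp]: "A \<in> carrier_mat n m \<Longrightarrow> mat_adjoint A \<in> carrier_mat m n"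
  unfolding carrier_mat_def by simp

lemma mat_adjoint_index [simp]:
  "i < dim_col A \<Longrightarrow> k < dim_row A \<Longrightarrow> mat_adjoint A $$ (i, k) = cnj (A $$ (k, i))"
  by (simp add: mat_adjoint_def mat_of_rows_def)

lemma mat_adjoint_one [simp]: "mat_adjoint (1\<^sub>m n) = (1\<^sub>m n :: complex mat)"
  by (rule eq_matI) simp_all

lemma mat_adjoint_mult:
  fixes A B :: "complex mat"
  assumes "A \<in> carrier_mat n m" "B \<in> carrier_mat m k"
  shows "mat_adjoint (A * B) = mat_adjoint B * mat_adjoint A"
proof (rule eq_matI)
  fix i l assume "i < dim_row (mat_adjoint B * mat_adjoint A)" "l < dim_col (mat_adjoint B * mat_adjoint A)"
  then have "i < k" "l < n" using assms by auto
  then show "mat_adjoint (A * B) $$ (i, l) = (mat_adjoint B * mat_adjoint A) $$ (i, l)"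
    using assms by (simp add: scalar_prod_def cnj_sum mult.commute)
qed (use assms in auto)

lemma mtrace_mult_commute:
  assumes "A \<in> carrier_mat n m" "B \<in> carrier_mat m n"
  shows "mtrace (A * B) = mtrace (B * A)"
proof -
  have "mtrace (A * B) = (\<Sum>i<n. \<Sum>k<m. A $$ (i, k) * B $$ (k, i))"
    using assms by (simp add: mtrace_def scalar_prod_def atLeast0LessThan)
  also have "\<dots> = (\<Sum>k<m. \<Sum>i<n. B $$ (k, i) * A $$ (i, k))"
    by (subst sum.swap) (simp add: mult.commute)
  also have "\<dots> = mtrace (B * A)"
    using assms by (simp add: mtrace_def scalar_prod_def atLeast0LessThan)
  finally show ?thesis .
qed

definition conjugate_by :: "complex mat \<Rightarrow> complex mat \<Rightarrow> complex mat" where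
  "conjugate_by U M = mat_adjoint U * M * U"

lemma conjugate_by_carrier [simp]:
  "U \<in> carrier_mat n n \<Longrightarrow> M \<in> carrier_mat n n \<Longrightarrow> conjugate_by U M \<in> carrier_mat n n"
  unfolding conjugate_by_def by (intro mult_carrier_mat mat_adjoint_carrier)

lemma conjugate_by_one:
  "U \<in> carrier_mat n n \<Longrightarrow> conjugate_by U (1\<^sub>m n) = mat_adjoint U * U"
  unfolding conjugate_by_def by simp

lemma conjugate_by_mult_left:
  assumes "A \<in> carrier_mat n n" "B \<in> carrier_mat n n" "M \<in> carrier_mat n n"
  shows "conjugate_by (A * B) M = conjugate_by B (conjugate_by A M)"
  unfolding conjugate_by_def mat_adjoint_mult[OF assms(1,2)]
  using assms by (simp add: assoc_mult_mat[of _ n n _ n _ n])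

lemma conjugate_by_commuting:
  assumes "U \<in> carrier_mat n n" "M \<in> carrier_mat n n"
    and "M * U = U * M" "mat_adjoint U * U = 1\<^sub>m n"
  shows "conjugate_by U M = M"
proof -
  have "conjugate_by U M = mat_adjoint U * (U * M)"
    unfolding conjugate_by_def using assms by (simp add: assoc_mult_mat[of _ n n _ n _ n])
  also have "\<dots> = (mat_adjoint U * U) * M"
    using assms by (intro assoc_mult_mat[symmetric]) auto
  also have "\<dots> = M"
    using assms by (simp only: assms(4)) simp
  finally show ?thesis .
qed

lemma conjugate_by_add:
  assumes "U \<in> carrier_mat n n" "M \<in> carrier_mat n n" "M' \<in> carrier_mat n n"
  shows "conjugate_by U (M + M') = conjugate_by U M + conjugate_by U M'"
  unfolding conjugate_by_def using assms
  by (simp add: add_mult_distrib_mat[of _ n n] mult_add_distrib_mat[of _ n n])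

lemma conjugate_by_smult:
  assumes "U \<in> carrier_mat n n" "M \<in> carrier_mat n n"
  shows "conjugate_by U (c \<cdot>\<^sub>m M) = c \<cdot>\<^sub>m conjugate_by U M"
  unfolding conjugate_by_def using assms
  by (simp add: mult_smult_distrib[of _ n n] mult_smult_assoc_mat[of _ n n])

lemma conjugate_by_mult:
  assumes "U \<in> carrier_mat n n" "M \<in> carrier_mat n n" "M' \<in> carrier_mat n n"
    and "U * mat_adjoint U = 1\<^sub>m n"
  shows "conjugate_by U (M * M') = conjugate_by U M * conjugate_by U M'"
proof -
  note assoc = assoc_mult_mat[of _ n n _ n _ n] mult_carrier_mat_square mat_adjoint_carrier assms(1-3)
  have "conjugate_by U (M * M') = mat_adjoint U * M * (M' * U)"
    unfolding conjugate_by_def by (simp only: assoc)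
  also have "\<dots> = mat_adjoint U * M * ((U * mat_adjoint U) * (M' * U))"
    using assms by simp
  also have "\<dots> = conjugate_by U M * conjugate_by U M'"
    unfolding conjugate_by_def by (simp only: assoc)
  finally show ?thesis .
qed

definition expectation :: "complex mat \<Rightarrow> complex mat \<Rightarrow> real" where
  "expectation \<rho> M = Re (mtrace (\<rho> * M))"

lemma expectation_add:
  assumes "\<rho> \<in> carrier_mat n n" "A \<in> carrier_mat n n" "B \<in> carrier_mat n n"
  shows "expectation \<rho> (A + B) = expectation \<rho> A + expectation \<rho> B"
  unfolding expectation_def mult_add_distrib_mat[OF assms] using assms
  by (simp add: mtrace_def sum.distrib)

lemma expectation_diff:
  assumes "\<rho> \<in> carrier_mat n n" "A \<in> carrier_mat n n" "B \<in> carrier_mat n n"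
  shows "expectation \<rho> (A - B) = expectation \<rho> A - expectation \<rho> B"
  unfolding expectation_def mult_minus_distrib_mat[OF assms] using assms
  by (simp add: mtrace_def sum_subtractf)

lemma expectation_scale:
  assumes "\<rho> \<in> carrier_mat n n" "A \<in> carrier_mat n n"
  shows "expectation \<rho> (complex_of_real x \<cdot>\<^sub>m A) = x * expectation \<rho> A"
  unfolding expectation_def mult_smult_distrib[OF assms] using assms
  by (simp add: mtrace_def sum_distrib_left)

lemma msum_Cons: "msum N (M # Ms) = M + msum N Ms"
  by (simp add: msum_def)

lemma msum_carrier:
  "\<forall>M\<in>set Ms. M \<in> carrier_mat (2^N) (2^N) \<Longrightarrow> msum N Ms \<in> carrier_mat (2^N) (2^N)"
  by (induction Ms) (auto simp: msum_def)

lemma conjugate_by_msum: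
  assumes "U \<in> carrier_mat (2^N) (2^N)" "\<forall>M\<in>set Ms. M \<in> carrier_mat (2^N) (2^N)"
  shows "conjugate_by U (msum N Ms) = msum N (map (conjugate_by U) Ms)"
  using assms(2)
proof (induction Ms)
  case Nil
  then show ?case
    using assms(1) by (simp add: msum_def conjugate_by_def)
next
  case (Cons M Ms)
  then show ?case
    using assms(1) by (simp add: msum_Cons conjugate_by_add msum_carrier)
qed

lemma expectation_msum:
  assumes "\<rho> \<in> carrier_mat (2^N) (2^N)" "\<forall>M\<in>set Ms. M \<in> carrier_mat (2^N) (2^N)"
  shows "expectation \<rho> (msum N Ms) = (\<Sum>M\<leftarrow>Ms. expectation \<rho> M)"
  using assms(2)
proof (induction Ms)
  case Nil
  then show ?case
    using assms(1) by (simp add: msum_def expectation_def mtrace_def)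
next
  case (Cons M Ms)
  then show ?case
    using assms(1) by (simp add: msum_Cons expectation_add msum_carrier)
qed

lemma sum_list_map_concat: "(\<Sum>x\<leftarrow>concat xss. f x) = (\<Sum>xs\<leftarrow>xss. \<Sum>x\<leftarrow>xs. f x)"
  by (induction xss) simp_all

lemma expectation_conjugate_by_msum:
  assumes "\<rho> \<in> carrier_mat (2^N) (2^N)" "U \<in> carrier_mat (2^N) (2^N)"
    and "\<forall>M\<in>set Ms. M \<in> carrier_mat (2^N) (2^N)"
  shows "expectation \<rho> (conjugate_by U (msum N Ms)) = (\<Sum>M\<leftarrow>Ms. expectation \<rho> (conjugate_by U M))"
  using assms by (simp add: conjugate_by_msum expectation_msum comp_def)

section \<open>Single-qubit operators\<close>

text \<open>The operator acting as the \<open>2 \<times> 2\<close> matrix \<open>f\<close> (indexed by bit values) on qubit \<open>a\<close>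
  and as the identity on all other qubits: entry \<open>(r, c)\<close> is \<open>f (bit r a) (bit c a)\<close> when the
  basis indices \<open>r\<close> and \<open>c\<close> agree outside bit \<open>a\<close>, and \<open>0\<close> otherwise.\<close>

definition qubit_op :: "nat \<Rightarrow> nat \<Rightarrow> (bool \<Rightarrow> bool \<Rightarrow> complex) \<Rightarrow> complex mat" where
  "qubit_op N a f = mat (2^N) (2^N)
     (\<lambda>(r, c). if c = r \<or> c = flip_bit a r then f (bit r a) (bit c a) else 0)"

lemma qubit_op_carrier [simp]: "qubit_op N a f \<in> carrier_mat (2^N) (2^N)"
  and qubit_op_dim [simp]: "dim_row (qubit_op N a f) = 2^N" "dim_col (qubit_op N a f) = 2^N"
  by (simp_all add: qubit_op_def)

lemma qubit_op_index [simp]: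
  "r < 2^N \<Longrightarrow> c < 2^N \<Longrightarrow>
   qubit_op N a f $$ (r, c) = (if c = r \<or> c = flip_bit a r then f (bit r a) (bit c a) else 0)"
  by (simp add: qubit_op_def)

lemma qubit_op_eqI:
  assumes "f False False = g False False" "f False True = g False True"
    and "f True False = g True False" "f True True = g True True"
  shows "qubit_op N a f = qubit_op N a g"
proof -
  have "f x y = g x y" for x y
    using assms by (cases x; cases y) simp_all
  then show ?thesis
    by presburger
qed

lemma qubit_op_mult_index:
  assumes "a < N" "B \<in> carrier_mat (2^N) m" "r < 2^N" "c < m"
  shows "(qubit_op N a f * B) $$ (r, c)
           = f (bit r a) (bit r a) * B $$ (r, c) + f (bit r a) (\<not> bit r a) * B $$ (flip_bit a r, c)"
proof -
  have fr: "flip_bit a r < 2^N"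
    using assms by (simp add: flip_bit_less_exp)
  have "(qubit_op N a f * B) $$ (r, c) = (\<Sum>k\<in>{..<2^N}. qubit_op N a f $$ (r, k) * B $$ (k, c))"
    using assms by (simp add: scalar_prod_def atLeast0LessThan)
  also have "\<dots> = (\<Sum>k\<in>{r, flip_bit a r}. qubit_op N a f $$ (r, k) * B $$ (k, c))"
    by (rule sum.mono_neutral_right) (use assms fr in auto)
  finally show ?thesis
    using assms fr by simp
qed

lemma qubit_op_mult:
  assumes "a < N"
  shows "qubit_op N a f * qubit_op N a g = qubit_op N a (\<lambda>x z. \<Sum>y\<in>UNIV. f x y * g y z)"
proof (rule eq_matI)
  fix r c assume "r < dim_row (qubit_op N a (\<lambda>x z. \<Sum>y\<in>UNIV. f x y * g y z))"
    "c < dim_col (qubit_op N a (\<lambda>x z. \<Sum>y\<in>UNIV. f x y * g y z))"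
  then have rc: "r < 2^N" "c < 2^N" by simp_all
  have fr: "flip_bit a r < 2^N"
    using rc assms by (simp add: flip_bit_less_exp)
  consider "c = r" | "c = flip_bit a r" | "c \<noteq> r" "c \<noteq> flip_bit a r"
    by blast
  then show "(qubit_op N a f * qubit_op N a g) $$ (r, c) = qubit_op N a (\<lambda>x z. \<Sum>y\<in>UNIV. f x y * g y z) $$ (r, c)"
    unfolding qubit_op_mult_index[OF assms qubit_op_carrier rc]
    by cases (use rc fr in \<open>cases "bit r a"; simp add: UNIV_bool add.commute\<close>)+
qed auto

lemma qubit_op_commute:
  assumes "a < N" "b < N" "a \<noteq> b"
  shows "qubit_op N a f * qubit_op N b g = qubit_op N b g * qubit_op N a f"
proof (rule eq_matI)
  fix r c assume "r < dim_row (qubit_op N b g * qubit_op N a f)" "c < dim_col (qubit_op N b g * qubit_op N a f)"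
  then have rc: "r < 2^N" "c < 2^N" by simp_all
  have fr: "flip_bit a r < 2^N" "flip_bit b r < 2^N"
    using rc assms by (simp_all add: flip_bit_less_exp)
  consider "c = r" | "c = flip_bit a r" | "c = flip_bit b r" | "c = flip_bit a (flip_bit b r)"
    | "c \<noteq> r" "c \<noteq> flip_bit a r" "c \<noteq> flip_bit b r" "c \<noteq> flip_bit a (flip_bit b r)"
    by blast
  then show "(qubit_op N a f * qubit_op N b g) $$ (r, c) = (qubit_op N b g * qubit_op N a f) $$ (r, c)"
    unfolding qubit_op_mult_index[OF assms(1) qubit_op_carrier rc]
      qubit_op_mult_index[OF assms(2) qubit_op_carrier rc]
    by cases (use assms rc fr in \<open>simp_all add: flip_bit_commute[of b a]\<close>)
qed auto

lemma qubit_op_adjoint: "mat_adjoint (qubit_op N a f) = qubit_op N a (\<lambda>x y. cnj (f y x))"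
proof (rule eq_matI)
  fix r c assume "r < dim_row (qubit_op N a (\<lambda>x y. cnj (f y x)))" "c < dim_col (qubit_op N a (\<lambda>x y. cnj (f y x)))"
  then have rc: "r < 2^N" "c < 2^N" by simp_all
  have "r = c \<or> r = flip_bit a c \<longleftrightarrow> c = r \<or> c = flip_bit a r" by auto
  then show "mat_adjoint (qubit_op N a f) $$ (r, c) = qubit_op N a (\<lambda>x y. cnj (f y x)) $$ (r, c)"
    using rc by simp
qed simp_all

lemma qubit_op_one: "qubit_op N a (\<lambda>x y. if x = y then 1 else 0) = 1\<^sub>m (2^N)"
  by (rule eq_matI) auto

lemma conjugate_by_qubit_op:
  assumes "a < N"
  shows "conjugate_by (qubit_op N a u) (qubit_op N a f)
           = qubit_op N a (\<lambda>x z. \<Sum>y\<in>UNIV. \<Sum>w\<in>UNIV. cnj (u y x) * f y w * u w z)"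
  unfolding conjugate_by_def qubit_op_adjoint qubit_op_mult[OF assms]
  by (rule qubit_op_eqI) (simp_all add: UNIV_bool algebra_simps)

lemma sigma_z_eq_qubit_op: "sigma_z N j = qubit_op N j (\<lambda>x y. if x = y then (if x then -1 else 1) else 0)"
  by (rule eq_matI) (auto simp: sigma_z_def)

lemma sigma_z_rot_eq_qubit_op:
  "sigma_z_rot N j t = qubit_op N j
     (\<lambda>x y. if x = y then (if x then - cos t else cos t) else - sin t)"
  by (rule eq_matI) (auto simp: sigma_z_rot_def sigma_z_def sigma_x_def)

lemma U_loc_eq_qubit_op:
  "U_loc N j t = qubit_op N j
     (\<lambda>x y. if x = y then cos (t/2) else if x then sin (t/2) else - sin (t/2))"
  by (rule eq_matI) (auto simp: U_loc_def sigma_y_def idm_def mult.assoc mult.left_commute[of \<i>])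

lemma U_loc_carrier [simp]: "U_loc N j t \<in> carrier_mat (2^N) (2^N)"
  and sigma_z_carrier [simp]: "sigma_z N j \<in> carrier_mat (2^N) (2^N)"
  and sigma_x_carrier [simp]: "sigma_x N j \<in> carrier_mat (2^N) (2^N)"
  and sigma_z_rot_carrier [simp]: "sigma_z_rot N j t \<in> carrier_mat (2^N) (2^N)"
  by (simp_all add: U_loc_eq_qubit_op sigma_z_eq_qubit_op sigma_z_rot_eq_qubit_op sigma_x_def)

lemma sigma_z_rot_commute:
  assumes "a < N" "b < N" "a \<noteq> b"
  shows "sigma_z_rot N a \<alpha> * sigma_z_rot N b \<beta> = sigma_z_rot N b \<beta> * sigma_z_rot N a \<alpha>"
  unfolding sigma_z_rot_eq_qubit_op using assms by (rule qubit_op_commute)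

lemma U_loc_unitary:
  assumes "a < N"
  shows "mat_adjoint (U_loc N a t) * U_loc N a t = 1\<^sub>m (2^N)"
proof -
  define c s where "c = complex_of_real (cos (t/2))" and "s = complex_of_real (sin (t/2))"
  have "sin (t/2) * sin (t/2) = 1 - cos (t/2) * cos (t/2)"
    using sin_cos_squared_add3[of "t/2"] by linarith
  then have s_sq: "s * s = 1 - c * c"
    unfolding c_def s_def by (metis of_real_1 of_real_diff of_real_mult)
  show ?thesis
    unfolding U_loc_eq_qubit_op qubit_op_adjoint qubit_op_mult[OF assms] qubit_op_one[symmetric, of N a]
    by (rule qubit_op_eqI) (simp_all add: UNIV_bool s_sq flip: c_def s_def)
qed

lemma conjugate_by_U_loc_sigma_z:
  assumes "j < N"
  shows "conjugate_by (U_loc N j t) (sigma_z N j) = sigma_z_rot N j t"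
proof -
  define c s where "c = complex_of_real (cos (t/2))" and "s = complex_of_real (sin (t/2))"
  have double_angle: "complex_of_real (cos t) = c * c - s * s" "complex_of_real (sin t) = 2 * s * c"
    using cos_double[of "t/2"] sin_double[of "t/2"]
    unfolding c_def s_def by (simp_all add: power2_eq_square)
  show ?thesis
    unfolding U_loc_eq_qubit_op sigma_z_eq_qubit_op sigma_z_rot_eq_qubit_op conjugate_by_qubit_op[OF assms]
    by (rule qubit_op_eqI) (simp_all add: UNIV_bool double_angle algebra_simps flip: c_def s_def)
qed

lemma conjugate_by_U_loc_other_qubit:
  assumes "a < N" "j < N" "a \<noteq> j"
  shows "conjugate_by (U_loc N a t) (qubit_op N j f) = qubit_op N j f"
proof (rule conjugate_by_commuting)
  show "qubit_op N j f * U_loc N a t = U_loc N a t * qubit_op N j f"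
    unfolding U_loc_eq_qubit_op using assms by (simp add: qubit_op_commute)
qed (simp_all add: U_loc_unitary assms)

section \<open>The feedback unitary\<close>

definition U_prod :: "nat \<Rightarrow> (nat \<Rightarrow> real) \<Rightarrow> nat list \<Rightarrow> complex mat" where
  "U_prod N \<theta> js = foldr (\<lambda>j M. U_loc N j (\<theta> j) * M) js (idm N)"

lemma U_prod_Nil [simp]: "U_prod N \<theta> [] = 1\<^sub>m (2^N)"
  and U_prod_Cons [simp]: "U_prod N \<theta> (j # js) = U_loc N j (\<theta> j) * U_prod N \<theta> js"
  by (simp_all add: U_prod_def idm_def)

lemma U_fb_eq_U_prod: "U_fb N \<theta> = U_prod N \<theta> [0..<N]"
  by (simp add: U_fb_def U_prod_def)

lemma U_prod_carrier [simp]: "U_prod N \<theta> js \<in> carrier_mat (2^N) (2^N)"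
  by (induction js) simp_all

lemma U_fb_carrier [simp]: "U_fb N \<theta> \<in> carrier_mat (2^N) (2^N)"
  by (simp add: U_fb_eq_U_prod)

lemma U_prod_unitary:
  assumes "set js \<subseteq> {..<N}"
  shows "mat_adjoint (U_prod N \<theta> js) * U_prod N \<theta> js = 1\<^sub>m (2^N)"
  using assms
proof (induction js)
  case (Cons a js)
  have "mat_adjoint (U_prod N \<theta> (a # js)) * U_prod N \<theta> (a # js)
          = conjugate_by (U_prod N \<theta> (a # js)) (1\<^sub>m (2^N))"
    by (simp add: conjugate_by_one)
  also have "\<dots> = conjugate_by (U_prod N \<theta> js) (conjugate_by (U_loc N a (\<theta> a)) (1\<^sub>m (2^N)))"
    by (simp add: conjugate_by_mult_left[of _ "2^N"])
  also have "\<dots> = 1\<^sub>m (2^N)"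
    using Cons by (simp add: conjugate_by_one U_loc_unitary)
  finally show ?case .
qed simp

lemma conjugate_by_U_prod_qubit_op:
  assumes "distinct js" "set js \<subseteq> {..<N}" "j < N"
  shows "conjugate_by (U_prod N \<theta> js) (qubit_op N j f)
           = (if j \<in> set js then conjugate_by (U_loc N j (\<theta> j)) (qubit_op N j f) else qubit_op N j f)"
  using assms(1,2)
proof (induction js arbitrary: f)
  case Nil
  then show ?case
    by (simp add: conjugate_by_def)
next
  case (Cons a js)
  have step: "conjugate_by (U_prod N \<theta> (a # js)) (qubit_op N j f)
      = conjugate_by (U_prod N \<theta> js) (conjugate_by (U_loc N a (\<theta> a)) (qubit_op N j f))"
    by (simp add: conjugate_by_mult_left[of _ "2^N"])
  show ?case
  proof (cases "a = j")
    case True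
    obtain g where "conjugate_by (U_loc N j (\<theta> j)) (qubit_op N j f) = qubit_op N j g"
      unfolding U_loc_eq_qubit_op conjugate_by_qubit_op[OF assms(3)] by blast
    then show ?thesis
      unfolding step using Cons True by simp
  next
    case False
    then show ?thesis
      unfolding step using Cons assms(3) by (simp add: conjugate_by_U_loc_other_qubit)
  qed
qed

lemma conjugate_by_U_fb_sigma_z:
  assumes "j < N"
  shows "conjugate_by (U_fb N \<theta>) (sigma_z N j) = sigma_z_rot N j (\<theta> j)"
proof -
  have "conjugate_by (U_prod N \<theta> [0..<N]) (qubit_op N j f)
          = conjugate_by (U_loc N j (\<theta> j)) (qubit_op N j f)" for f
    using assms by (subst conjugate_by_U_prod_qubit_op) auto
  then show ?thesis
    using conjugate_by_U_loc_sigma_z[OF assms]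
    unfolding U_fb_eq_U_prod sigma_z_eq_qubit_op by simp
qed

lemma U_fb_unitary:
  "mat_adjoint (U_fb N \<theta>) * U_fb N \<theta> = 1\<^sub>m (2^N)"
  "U_fb N \<theta> * mat_adjoint (U_fb N \<theta>) = 1\<^sub>m (2^N)"
proof -
  show *: "mat_adjoint (U_fb N \<theta>) * U_fb N \<theta> = 1\<^sub>m (2^N)"
    unfolding U_fb_eq_U_prod by (rule U_prod_unitary) auto
  show "U_fb N \<theta> * mat_adjoint (U_fb N \<theta>) = 1\<^sub>m (2^N)"
    by (rule mat_mult_left_right_inverse[OF _ _ *]) (simp_all add: U_fb_eq_U_prod)
qed

section \<open>The post-feedback energy as a function of one angle\<close>

lemma E_F_eq_expectation:
  assumes "\<rho> \<in> carrier_mat (2^N) (2^N)"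
  shows "E_F N \<epsilon> \<Delta> \<rho> \<theta> = expectation \<rho> (conjugate_by (U_fb N \<theta>) (H_S N \<epsilon> \<Delta>))"
proof -
  let ?U = "U_fb N \<theta>" and ?H = "H_S N \<epsilon> \<Delta>"
  have H: "?H \<in> carrier_mat (2^N) (2^N)"
    unfolding H_S_def by (rule msum_carrier) (auto simp: idm_def)
  note carriers = assms H U_fb_carrier mat_adjoint_carrier mult_carrier_mat_square
  have "mtrace (?U * \<rho> * mat_adjoint ?U * ?H) = mtrace (?U * (\<rho> * mat_adjoint ?U * ?H))"
    by (simp only: assoc_mult_mat[of _ "2^N" "2^N" _ "2^N" _ "2^N"] carriers)
  also have "\<dots> = mtrace ((\<rho> * mat_adjoint ?U * ?H) * ?U)"
    by (rule mtrace_mult_commute[of _ "2^N" "2^N"]) (simp_all add: carriers)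
  also have "\<dots> = mtrace (\<rho> * conjugate_by ?U ?H)"
    unfolding conjugate_by_def by (simp only: assoc_mult_mat[of _ "2^N" "2^N" _ "2^N" _ "2^N"] carriers)
  finally show ?thesis
    unfolding E_F_def expectation_def by simp
qed

lemma E_F_expansion:
  assumes "\<rho> \<in> carrier_mat (2^N) (2^N)"
  shows "E_F N \<epsilon> \<Delta> \<rho> \<theta> = expectation \<rho> ((1/2) \<cdot>\<^sub>m idm N)
     + (\<Sum>j = 0..<N. \<epsilon> j / 2 * expectation \<rho> (sigma_z_rot N j (\<theta> j)))
     + (\<Sum>j = 0..<N. \<Sum>k = Suc j..<N.
          \<Delta> j k * expectation \<rho> (sigma_z_rot N j (\<theta> j) * sigma_z_rot N k (\<theta> k)))"
proof -
  let ?U = "U_fb N \<theta>"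
  have idm: "idm N \<in> carrier_mat (2^N) (2^N)"
    by (simp add: idm_def)
  have half: "conjugate_by ?U ((1/2) \<cdot>\<^sub>m idm N) = (1/2) \<cdot>\<^sub>m idm N"
    using idm by (simp add: conjugate_by_smult[of _ "2^N"] idm_def conjugate_by_one U_fb_unitary)
  have field: "expectation \<rho> (conjugate_by ?U (complex_of_real (\<epsilon> j / 2) \<cdot>\<^sub>m sigma_z N j))
      = \<epsilon> j / 2 * expectation \<rho> (sigma_z_rot N j (\<theta> j))" if "j < N" for j
    using assms that
    by (simp add: conjugate_by_smult[of _ "2^N"] conjugate_by_U_fb_sigma_z expectation_scale[of _ "2^N"]
        del: of_real_divide)
  have coupling: "expectation \<rho> (conjugate_by ?U (complex_of_real (\<Delta> j k) \<cdot>\<^sub>m (sigma_z N j * sigma_z N k)))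
      = \<Delta> j k * expectation \<rho> (sigma_z_rot N j (\<theta> j) * sigma_z_rot N k (\<theta> k))" if "j < N" "k < N" for j k
    using assms that
    by (simp add: conjugate_by_smult[of _ "2^N"] conjugate_by_mult[of _ "2^N"] U_fb_unitary
        conjugate_by_U_fb_sigma_z expectation_scale[of _ "2^N"])
  show ?thesis
    unfolding E_F_eq_expectation[OF assms] H_S_def
    by (subst expectation_conjugate_by_msum[OF assms U_fb_carrier])
      (auto simp: idm half field coupling sum_list_map_concat interv_sum_list_conv_sum_set_nat
        simp del: of_real_divide)
qed

lemma expectation_sigma_z_rot_mult:
  assumes "\<rho> \<in> carrier_mat (2^N) (2^N)" "M \<in> carrier_mat (2^N) (2^N)"
  shows "expectation \<rho> (sigma_z_rot N j t * M)
           = cos t * expectation \<rho> (sigma_z N j * M) - sin t * expectation \<rho> (sigma_x N j * M)"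
proof -
  have "sigma_z_rot N j t * M
      = complex_of_real (cos t) \<cdot>\<^sub>m (sigma_z N j * M) - complex_of_real (sin t) \<cdot>\<^sub>m (sigma_x N j * M)"
    unfolding sigma_z_rot_def using assms
    by (simp add: minus_mult_distrib_mat[of _ "2^N" "2^N"] mult_smult_assoc_mat[of _ "2^N" "2^N"])
  then show ?thesis
    using assms by (simp add: expectation_diff[of _ "2^N"] expectation_scale[of _ "2^N"])
qed

lemma expectation_sigma_z_rot:
  assumes "\<rho> \<in> carrier_mat (2^N) (2^N)"
  shows "expectation \<rho> (sigma_z_rot N j t)
           = cos t * expectation \<rho> (sigma_z N j) - sin t * expectation \<rho> (sigma_x N j)"
  using expectation_sigma_z_rot_mult[OF assms one_carrier_mat, of j t]
  by (simp add: right_mult_one_mat[OF sigma_z_rot_carrier] right_mult_one_mat[OF sigma_z_carrier]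
      right_mult_one_mat[OF sigma_x_carrier])

lemma A_coef_eq_expectation:
  assumes "\<rho> \<in> carrier_mat (2^N) (2^N)"
  shows "A_coef N \<epsilon> \<Delta> \<rho> j \<theta> = \<epsilon> j / 2 * expectation \<rho> (sigma_z N j)
     + (\<Sum>k\<in>{0..<N} - {j}. \<Delta> (min j k) (max j k) * expectation \<rho> (sigma_z N j * sigma_z_rot N k (\<theta> k)))"
  unfolding A_coef_def expectation_def using assms
  by (simp add: assoc_mult_mat[of _ "2^N" "2^N" _ "2^N" _ "2^N"])

lemma B_coef_eq_expectation:
  assumes "\<rho> \<in> carrier_mat (2^N) (2^N)"
  shows "B_coef N \<epsilon> \<Delta> \<rho> j \<theta> = \<epsilon> j / 2 * expectation \<rho> (sigma_x N j)
     + (\<Sum>k\<in>{0..<N} - {j}. \<Delta> (min j k) (max j k) * expectation \<rho> (sigma_x N j * sigma_z_rot N k (\<theta> k)))"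
  unfolding B_coef_def expectation_def using assms
  by (simp add: assoc_mult_mat[of _ "2^N" "2^N" _ "2^N" _ "2^N"])

lemma sum_upper_pairs_split:
  fixes h :: "nat \<Rightarrow> nat \<Rightarrow> 'a::comm_monoid_add"
  assumes "j0 < N"
  shows "(\<Sum>j = 0..<N. \<Sum>k = Suc j..<N. h j k)
       = (\<Sum>j = 0..<N. \<Sum>k = Suc j..<N. if j = j0 \<or> k = j0 then 0 else h j k)
         + (\<Sum>k\<in>{0..<N} - {j0}. h (min j0 k) (max j0 k))"
proof -
  have inner: "(\<Sum>k = Suc j..<N. if j = j0 \<or> k = j0 then h j k else 0)
      = (if j = j0 then (\<Sum>k = Suc j0..<N. h j0 k) else 0) + (if j < j0 then h j j0 else 0)" for j
    using assms by (cases "j = j0") (simp_all add: sum.delta)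
  have "{j. j < N \<and> j < j0} = {0..<j0}" "{0..<N} - {j0} = {Suc j0..<N} \<union> {0..<j0}"
    using assms by auto
  then have pairs_with_j0: "(\<Sum>j = 0..<N. \<Sum>k = Suc j..<N. if j = j0 \<or> k = j0 then h j k else 0)
      = (\<Sum>k\<in>{0..<N} - {j0}. h (min j0 k) (max j0 k))"
    unfolding inner sum.distrib using assms
    by (simp add: sum.delta sum.inter_filter[symmetric] sum.union_disjoint)
  have "(\<Sum>j = 0..<N. \<Sum>k = Suc j..<N. h j k)
      = (\<Sum>j = 0..<N. \<Sum>k = Suc j..<N.
           (if j = j0 \<or> k = j0 then 0 else h j k) + (if j = j0 \<or> k = j0 then h j k else 0))"
    by (intro sum.cong refl) simp
  then show ?thesis
    unfolding sum.distrib pairs_with_j0 .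
qed

lemma E_F_sinusoidal_in_one_angle:
  assumes \<rho>: "\<rho> \<in> carrier_mat (2^N) (2^N)" and j0: "j0 < N"
  shows "\<exists>C. \<forall>t. E_F N \<epsilon> \<Delta> \<rho> (\<theta>(j0 := t))
                 = C + cos t * A_coef N \<epsilon> \<Delta> \<rho> j0 \<theta> - sin t * B_coef N \<epsilon> \<Delta> \<rho> j0 \<theta>"
proof -
  define field where "field \<phi> j = \<epsilon> j / 2 * expectation \<rho> (sigma_z_rot N j (\<phi> j))" for \<phi> j
  define pair where
    "pair \<phi> j k = \<Delta> j k * expectation \<rho> (sigma_z_rot N j (\<phi> j) * sigma_z_rot N k (\<phi> k))" for \<phi> j k
  define zz where "zz k = \<Delta> (min j0 k) (max j0 k) * expectation \<rho> (sigma_z N j0 * sigma_z_rot N k (\<theta> k))" for k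
  define xz where "xz k = \<Delta> (min j0 k) (max j0 k) * expectation \<rho> (sigma_x N j0 * sigma_z_rot N k (\<theta> k))" for k
  define C where "C = expectation \<rho> ((1/2) \<cdot>\<^sub>m idm N) + (\<Sum>j\<in>{0..<N} - {j0}. field \<theta> j)
    + (\<Sum>j = 0..<N. \<Sum>k = Suc j..<N. if j = j0 \<or> k = j0 then 0 else pair \<theta> j k)"
  have "E_F N \<epsilon> \<Delta> \<rho> (\<theta>(j0 := t))
          = C + cos t * A_coef N \<epsilon> \<Delta> \<rho> j0 \<theta> - sin t * B_coef N \<epsilon> \<Delta> \<rho> j0 \<theta>" for t
  proof -
    let ?\<phi> = "\<theta>(j0 := t)"
    have fields: "(\<Sum>j = 0..<N. field ?\<phi> j) = (\<Sum>j\<in>{0..<N} - {j0}. field \<theta> j)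
        + \<epsilon> j0 / 2 * (cos t * expectation \<rho> (sigma_z N j0) - sin t * expectation \<rho> (sigma_x N j0))"
      using j0 by (simp add: sum.remove field_def expectation_sigma_z_rot[OF \<rho>] add.commute)
    have pair_j0: "pair ?\<phi> (min j0 k) (max j0 k) = cos t * zz k - sin t * xz k"
      if "k \<in> {0..<N} - {j0}" for k
    proof -
      have "pair ?\<phi> (min j0 k) (max j0 k)
          = \<Delta> (min j0 k) (max j0 k) * expectation \<rho> (sigma_z_rot N j0 t * sigma_z_rot N k (\<theta> k))"
        using that j0 sigma_z_rot_commute[of k N j0] by (cases "j0 < k") (auto simp: pair_def min_def max_def)
      then show ?thesis
        using \<rho> by (simp add: expectation_sigma_z_rot_mult zz_def xz_def algebra_simps)
    qed
    have pairs: "(\<Sum>j = 0..<N. \<Sum>k = Suc j..<N. pair ?\<phi> j k)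
        = (\<Sum>j = 0..<N. \<Sum>k = Suc j..<N. if j = j0 \<or> k = j0 then 0 else pair \<theta> j k)
          + (\<Sum>k\<in>{0..<N} - {j0}. cos t * zz k - sin t * xz k)"
      unfolding sum_upper_pairs_split[OF j0, of "pair ?\<phi>"]
      by (intro arg_cong2[where f = "(+)"] sum.cong refl pair_j0) (auto simp: pair_def)
    show ?thesis
      unfolding E_F_expansion[OF \<rho>] A_coef_eq_expectation[OF \<rho>] B_coef_eq_expectation[OF \<rho>]
      using fields pairs
      by (simp add: C_def field_def pair_def zz_def xz_def sum_subtractf sum_distrib_left algebra_simps)
  qed
  then show ?thesis
    by blast
qed

section \<open>Stationary points of a sinusoid\<close>

lemma sinusoid_minimum_stationary:
  fixes A B t0 :: real
  assumes "\<And>t. cos t0 * A - sin t0 * B \<le> cos t * A - sin t * B"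
  shows "A * sin t0 + B * cos t0 = 0"
proof -
  have "((\<lambda>t. cos t * A - sin t * B) has_real_derivative - sin t0 * A - cos t0 * B) (at t0)"
    by (auto intro!: derivative_eq_intros)
  then have "- sin t0 * A - cos t0 * B = 0"
    by (rule DERIV_local_min[of _ _ _ 1]) (use assms in auto)
  then show ?thesis
    by (simp add: algebra_simps)
qed

lemma atan2_sin_cos: "x * sin (atan2 y x) = y * cos (atan2 y x)"
proof -
  have "x * sin (arctan (y / x)) = y * cos (arctan (y / x))" if "x \<noteq> 0"
  proof -
    have "sin (arctan (y / x)) = y / x * cos (arctan (y / x))"
      using cos_arctan_not_zero[of "y / x"] tan_arctan[of "y / x"] by (simp add: tan_def field_simps)
    then show ?thesis
      using that by simp
  qed
  then show ?thesis
    unfolding atan2_def by (auto simp: sin_add cos_add sin_diff cos_diff)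
qed

lemma tan_eq_of_stationary:
  fixes A B t :: real
  assumes "A * sin t + B * cos t = 0" "A \<noteq> 0"
  shows "tan t = - B / A"
proof -
  have "cos t \<noteq> 0"
  proof
    assume "cos t = 0"
    then have "sin t \<noteq> 0"
      using sin_cos_squared_add[of t] by auto
    then show False
      using assms \<open>cos t = 0\<close> by simp
  qed
  then show ?thesis
    using assms by (simp add: tan_def field_simps)
qed

lemma eq_atan2_mod_pi_of_stationary:
  fixes A B t :: real
  assumes "A * sin t + B * cos t = 0" "(A, B) \<noteq> (0, 0)"
  shows "\<exists>m::int. t = atan2 (- B) A + of_int m * pi"
proof -
  define \<phi> where "\<phi> = atan2 (- B) A"
  have \<phi>: "A * sin \<phi> + B * cos \<phi> = 0"
    using atan2_sin_cos[of A "- B"] unfolding \<phi>_def by simp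
  have "sin (t - \<phi>) = 0"
  proof (cases "A = 0")
    case True
    then have "cos t = 0" "cos \<phi> = 0"
      using assms \<phi> by auto
    then show ?thesis
      by (simp add: sin_diff)
  next
    case False
    then have "sin t = - B * cos t / A" "sin \<phi> = - B * cos \<phi> / A"
      using assms(1) \<phi> by (simp_all add: field_simps)
    then show ?thesis
      by (simp add: sin_diff field_simps)
  qed
  then obtain m :: int where "t - \<phi> = of_int m * pi"
    using sin_zero_iff_int2 by blast
  then show ?thesis
    unfolding \<phi>_def by (intro exI[of _ m]) simp
qed

theorem theorem1:
  fixes N :: nat and \<epsilon> :: "nat \<Rightarrow> real" and \<Delta> :: "nat \<Rightarrow> nat \<Rightarrow> real"
    and \<rho> :: "complex mat" and \<theta>s :: "nat \<Rightarrow> real"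
  assumes "N \<ge> 1"
    and "density_matrix N \<rho>"
    and "\<forall>\<theta>. E_F N \<epsilon> \<Delta> \<rho> \<theta>s \<le> E_F N \<epsilon> \<Delta> \<rho> \<theta>"
  shows "\<forall>j<N.
           (A_coef N \<epsilon> \<Delta> \<rho> j \<theta>s \<noteq> 0 \<longrightarrow>
              tan (\<theta>s j) = - B_coef N \<epsilon> \<Delta> \<rho> j \<theta>s / A_coef N \<epsilon> \<Delta> \<rho> j \<theta>s)
         \<and> ((A_coef N \<epsilon> \<Delta> \<rho> j \<theta>s, B_coef N \<epsilon> \<Delta> \<rho> j \<theta>s) \<noteq> (0, 0) \<longrightarrow>
              (\<exists>m::int. \<theta>s j = atan2 (- B_coef N \<epsilon> \<Delta> \<rho> j \<theta>s) (A_coef N \<epsilon> \<Delta> \<rho> j \<theta>s)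
                             + of_int m * pi))"
proof (intro allI impI)
  fix j assume j: "j < N"
  have \<rho>: "\<rho> \<in> carrier_mat (2^N) (2^N)"
    using assms(2) by (simp add: density_matrix_def)
  let ?A = "A_coef N \<epsilon> \<Delta> \<rho> j \<theta>s" and ?B = "B_coef N \<epsilon> \<Delta> \<rho> j \<theta>s"
  obtain C where C: "\<And>t. E_F N \<epsilon> \<Delta> \<rho> (\<theta>s(j := t)) = C + cos t * ?A - sin t * ?B"
    using E_F_sinusoidal_in_one_angle[OF \<rho> j] by blast
  have "cos (\<theta>s j) * ?A - sin (\<theta>s j) * ?B \<le> cos t * ?A - sin t * ?B" for t
  proof -
    have "E_F N \<epsilon> \<Delta> \<rho> (\<theta>s(j := \<theta>s j)) \<le> E_F N \<epsilon> \<Delta> \<rho> (\<theta>s(j := t))"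
      using assms(3) by simp
    then show ?thesis
      unfolding C by simp
  qed
  then have "?A * sin (\<theta>s j) + ?B * cos (\<theta>s j) = 0"
    by (rule sinusoid_minimum_stationary)
  then show "(?A \<noteq> 0 \<longrightarrow> tan (\<theta>s j) = - ?B / ?A)
      \<and> ((?A, ?B) \<noteq> (0, 0) \<longrightarrow> (\<exists>m::int. \<theta>s j = atan2 (- ?B) ?A + of_int m * pi))"
    by (simp add: tan_eq_of_stationary eq_atan2_mod_pi_of_stationary)
qed

end
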